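(* If $(\Sigma,*,\mathsf{emp})$ is a separation algebra, then $(\mathsf{HST},*,\mathsf{emphst})$ is a separation algebra, where $\mathsf{HST}=\mathsf{H}_\varepsilon.\Sigma$ with $\mathsf{H}_\varepsilon=(\Sigma^+.\mathsf{COM})^*.\Sigma^*$, the product $\mathit{hst}_1.s_1*\mathit{hst}_2.s_2$ is defined iff $\mathit{hst}_1=\mathit{hst}_2$ and $s_1*s_2$ is defined, in which case it equals $\mathit{hst}_1.(s_1*s_2)$, and $\mathsf{emphst}=\mathsf{H}_\varepsilon.\mathsf{emp}$.
   Context: A separation algebra $(\Sigma,*,\mathsf{emp})$ is a partial commutative monoid with a set of units $\mathsf{emp}$ such that every $s\in\Sigma$ has a unit $1$ with $s*1=s$ and $1*1'$ is undefined for distinct units $1,1'$. $\mathsf{COM}$ is an arbitrary (possibly infinite) set of commands, disjoint from $\Sigma$. Histories are finite words interleaving nonempty sequences of states with commands and ending in a state; concatenation is written with dots. *)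

theory Defs
  imports Main
begin

definition sep_algebra :: "'a set \<Rightarrow> ('a \<Rightarrow> 'a \<Rightarrow> 'a option) \<Rightarrow> 'a set \<Rightarrow> bool" where
  "sep_algebra S m E \<longleftrightarrow>
     (\<forall>a\<in>S. \<forall>b\<in>S. \<forall>c. m a b = Some c \<longrightarrow> c \<in> S) \<and>
     (\<forall>a\<in>S. \<forall>b\<in>S. m a b = m b a) \<and>
     (\<forall>a\<in>S. \<forall>b\<in>S. \<forall>c\<in>S.
        Option.bind (m a b) (\<lambda>ab. m ab c) = Option.bind (m b c) (\<lambda>bc. m a bc)) \<and>
     E \<subseteq> S \<and>
     (\<forall>a\<in>S. \<exists>u\<in>E. m a u = Some a) \<and>
     (\<forall>u\<in>E. \<forall>u'\<in>E. u \<noteq> u' \<longrightarrow> m u u' = None)"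

text \<open>Words over states ('s) and commands ('c); Inl = state, Inr = command.\<close>
definition hblocks :: "'s set \<Rightarrow> 'c set \<Rightarrow> ('s + 'c) list set" where
  "hblocks S C = {map Inl ss @ [Inr c] | ss c. ss \<noteq> [] \<and> set ss \<subseteq> S \<and> c \<in> C}"

text \<open>H_eps = (S^+ . COM)^* . S^*\<close>
definition H_eps :: "'s set \<Rightarrow> 'c set \<Rightarrow> ('s + 'c) list set" where
  "H_eps S C = {concat bs @ map Inl ss | bs ss. set bs \<subseteq> hblocks S C \<and> set ss \<subseteq> S}"

definition HST :: "'s set \<Rightarrow> 'c set \<Rightarrow> ('s + 'c) list set" where
  "HST S C = {h @ [Inl s] | h s. h \<in> H_eps S C \<and> s \<in> S}"

definition emphst :: "'s set \<Rightarrow> 'c set \<Rightarrow> 's set \<Rightarrow> ('s + 'c) list set" where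
  "emphst S C E = {h @ [Inl u] | h u. h \<in> H_eps S C \<and> u \<in> E}"

definition hst_mult :: "('s \<Rightarrow> 's \<Rightarrow> 's option) \<Rightarrow> ('s + 'c) list \<Rightarrow> ('s + 'c) list \<Rightarrow> ('s + 'c) list option" where
  "hst_mult m x y =
     (if x \<noteq> [] \<and> y \<noteq> [] \<and> butlast x = butlast y then
        (case (last x, last y) of
           (Inl s1, Inl s2) \<Rightarrow> map_option (\<lambda>s. butlast x @ [Inl s]) (m s1 s2)
         | _ \<Rightarrow> None)
      else None)"

end

theory Submission
  imports Defs
begin

text \<open>Since the product only combines histories with the same prefix, HST splits into one copy
of the state algebra per prefix in H_eps, with emphst as the copies of the units; each axiom
transfers copy by copy. Nothing about the shape of H_eps is used.\<close>

definition snoc_states :: "('s + 'c) list set \<Rightarrow> 's set \<Rightarrow> ('s + 'c) list set" where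
  "snoc_states H A = {h @ [Inl a] | h a. h \<in> H \<and> a \<in> A}"

lemma HST_eq_snoc_states: "HST S C = snoc_states (H_eps S C) S"
  by (simp add: HST_def snoc_states_def)

lemma emphst_eq_snoc_states: "emphst S C E = snoc_states (H_eps S C) E"
  by (simp add: emphst_def snoc_states_def)

lemma ball_snoc_states: "(\<forall>x\<in>snoc_states H A. P x) \<longleftrightarrow> (\<forall>h\<in>H. \<forall>a\<in>A. P (h @ [Inl a]))"
  unfolding snoc_states_def by blast

lemma bex_snoc_states: "(\<exists>x\<in>snoc_states H A. P x) \<longleftrightarrow> (\<exists>h\<in>H. \<exists>a\<in>A. P (h @ [Inl a]))"
  unfolding snoc_states_def by blast

lemma snoc_states_mono: "A \<subseteq> B \<Longrightarrow> snoc_states H A \<subseteq> snoc_states H B"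
  unfolding snoc_states_def by blast

lemma hst_mult_snoc [simp]:
  "hst_mult m (h @ [Inl a]) (h' @ [Inl b]) =
     (if h = h' then map_option (\<lambda>s. h @ [Inl s]) (m a b) else None)"
  by (simp add: hst_mult_def)

lemma bind_hst_mult_left:
  "Option.bind (hst_mult m (h @ [Inl a]) (h' @ [Inl b])) (\<lambda>x. hst_mult m x (h'' @ [Inl c])) =
     (if h = h' \<and> h' = h'' then map_option (\<lambda>s. h @ [Inl s]) (Option.bind (m a b) (\<lambda>ab. m ab c))
      else None)"
  by (cases "m a b") auto

lemma bind_hst_mult_right:
  "Option.bind (hst_mult m (h' @ [Inl b]) (h'' @ [Inl c])) (\<lambda>x. hst_mult m (h @ [Inl a]) x) =
     (if h = h' \<and> h' = h'' then map_option (\<lambda>s. h @ [Inl s]) (Option.bind (m b c) (\<lambda>bc. m a bc))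
      else None)"
  by (cases "m b c") auto

lemma sep_algebra_snoc_states:
  assumes "sep_algebra S m E"
  shows "sep_algebra (snoc_states H S) (hst_mult m) (snoc_states H E)"
proof -
  have base_closed: "\<And>a b c. a \<in> S \<Longrightarrow> b \<in> S \<Longrightarrow> m a b = Some c \<Longrightarrow> c \<in> S"
    and base_commute: "\<And>a b. a \<in> S \<Longrightarrow> b \<in> S \<Longrightarrow> m a b = m b a"
    and base_assoc: "\<And>a b c. a \<in> S \<Longrightarrow> b \<in> S \<Longrightarrow> c \<in> S \<Longrightarrow>
      Option.bind (m a b) (\<lambda>ab. m ab c) = Option.bind (m b c) (\<lambda>bc. m a bc)"
    and base_units: "E \<subseteq> S"
    and base_unit_exists: "\<And>a. a \<in> S \<Longrightarrow> \<exists>u\<in>E. m a u = Some a"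
    and base_units_disjoint: "\<And>u u'. u \<in> E \<Longrightarrow> u' \<in> E \<Longrightarrow> u \<noteq> u' \<Longrightarrow> m u u' = None"
    using assms unfolding sep_algebra_def by blast+
  have closed: "hst_mult m (h @ [Inl a]) (h' @ [Inl b]) = Some x \<Longrightarrow> x \<in> snoc_states H S"
    if "h \<in> H" "a \<in> S" "b \<in> S" for h h' a b x
    using that by (auto simp: snoc_states_def split: if_splits dest: base_closed)
  have commute: "hst_mult m (h @ [Inl a]) (h' @ [Inl b]) = hst_mult m (h' @ [Inl b]) (h @ [Inl a])"
    if "a \<in> S" "b \<in> S" for h h' a b
    using base_commute[OF that] by auto
  have assoc:
    "Option.bind (hst_mult m (h @ [Inl a]) (h' @ [Inl b])) (\<lambda>xy. hst_mult m xy (h'' @ [Inl c])) =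
     Option.bind (hst_mult m (h' @ [Inl b]) (h'' @ [Inl c])) (\<lambda>yz. hst_mult m (h @ [Inl a]) yz)"
    if "a \<in> S" "b \<in> S" "c \<in> S" for h h' h'' a b c
    unfolding bind_hst_mult_left bind_hst_mult_right using base_assoc[OF that] by simp
  have unit_exists: "\<exists>h'\<in>H. \<exists>e\<in>E. hst_mult m (h @ [Inl a]) (h' @ [Inl e]) = Some (h @ [Inl a])"
    if "h \<in> H" "a \<in> S" for h a
    using that base_unit_exists[OF that(2)] by auto
  have units_disjoint: "hst_mult m (h @ [Inl e]) (h' @ [Inl e']) = None"
    if "e \<in> E" "e' \<in> E" "h @ [Inl e] \<noteq> h' @ [Inl e']" for h h' e e'
    using that base_units_disjoint[of e e'] by auto
  show ?thesis
    unfolding sep_algebra_def ball_snoc_states bex_snoc_states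
    by (intro conjI ballI allI impI snoc_states_mono[OF base_units]
        closed commute assoc unit_exists units_disjoint)
qed

theorem lemma4p7:
  fixes S :: "'s set" and m :: "'s \<Rightarrow> 's \<Rightarrow> 's option" and E :: "'s set"
    and COM :: "'c set"
  assumes "sep_algebra S m E"
  shows "sep_algebra (HST S COM) (hst_mult m) (emphst S COM E)"
  unfolding HST_eq_snoc_states emphst_eq_snoc_states
  using assms by (rule sep_algebra_snoc_states)

end
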